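(* Consider a solution $(\Sigma_+,\mathcal{R}_1,\mathcal{R}_2,M,\psi,v)$, defined for all $\tau\ge\tau_0$, of the system \begin{align*} \Sigma_+' &= -(1-\Sigma_+^2)\Sigma_+ - \mathcal{R}_1 + (1+\Sigma_+)\mathcal{R}_2\cos 2\psi - \frac{4\Omega v^2}{3+v^2},\\ \mathcal{R}_1' &= 2\big[(1+\Sigma_+)\Sigma_+ + \mathcal{R}_2\cos 2\psi\big]\mathcal{R}_1 - 2(1+\Sigma_+)(\cos 2\psi)\mathcal{R}_2,\\ \mathcal{R}_2' &= 2\big[(1+\Sigma_+)\Sigma_+ + \mathcal{R}_2\cos 2\psi\big]\mathcal{R}_2 - 2(1+\Sigma_+)(\cos 2\psi)\mathcal{R}_1,\\ M' &= -\big[(1+\Sigma_+)^2 + \mathcal{R}_2\cos 2\psi + 3\mathcal{R}_2 M\sin 2\psi\big]M,\\ \psi' &= \frac{2}{M} + (1+\Sigma_+)\frac{\mathcal{R}_1}{\mathcal{R}_2}\sin 2\psi,\\ v' &= \frac{6}{3-v^2}\Sigma_+(1-v^2)v, \end{align*} with constraint $\mathcal{R}_1^2-\mathcal{R}_2^2-\left(\frac{4\Omega v}{3+v^2}\right)^2=0$, where $\Omega:=1-\Sigma_+^2-\mathcal{R}_1$ (so that $\Omega'=2\big[\Sigma_+^2+\mathcal{R}_2\cos2\psi+\frac{4v^2}{3+v^2}\Sigma_+\big]\Omega$). Then it is not possible that both \[ \lim_{\tau\to+\infty}\Omega=0\quad\text{and}\quad \lim_{\tau\to+\infty}\Sigma_+=\alpha\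 \text{ for some } 0\le\alpha<1. \]
   Context: This system describes spatially homogeneous Bianchi type VII$_0$ cosmologies with a tilted irrotational radiation perfect fluid, zero cosmological constant, in Hubble-normalized variables with dimensionless time $\tau$; $'$ denotes $d/d\tau$. Here $\mathcal{R}_1,\mathcal{R}_2,\psi$ are rotation-invariant combinations of Hubble-normalized shear and curvature components with $\mathcal{R}_1>0$, $\mathcal{R}_2>0$, and $M=1/N_+$ with $N_+$ a Hubble-normalized spatial curvature variable; for these cosmologies it is a known standing fact, used by the paper, that $M\to0$ as $\tau\to+\infty$. *)

theory Defs
  imports Complex_Main
begin

definition Omega_of :: "real \<Rightarrow> real \<Rightarrow> real" where
  "Omega_of Sp R1 = 1 - Sp\<^sup>2 - R1"

end

theory Submission
  imports Defs
begin

text \<open>Suppose \<open>\<Omega> \<rightarrow> 0\<close> and \<open>\<Sigma>\<^sub>+ \<rightarrow> \<alpha> \<in> [0,1)\<close>. Then \<open>\<R>\<^sub>1 \<rightarrow> 1 - \<alpha>\<^sup>2\<close>, and the constraint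
  gives \<open>|\<R>\<^sub>2| \<le> |\<R>\<^sub>1|\<close>, so \<open>\<R>\<^sub>2\<close> stays bounded. The equation for \<open>\<Sigma>\<^sub>+\<close> contains the term
  \<open>(1 + \<Sigma>\<^sub>+) \<R>\<^sub>2 cos 2\<psi>\<close>, which oscillates fast because \<open>\<psi>' \<approx> 2/M \<rightarrow> \<infinity>\<close>. It is removed by
  averaging: since \<open>\<psi>' M = 2 + O(M)\<close>, the averaged shear
  \<open>F = \<Sigma>\<^sub>+ - (1 + \<Sigma>\<^sub>+) \<R>\<^sub>2 M sin 2\<psi> / 4\<close> satisfies
  \<open>F' = -(1 - \<Sigma>\<^sub>+\<^sup>2) \<Sigma>\<^sub>+ - \<R>\<^sub>1 + O(\<Omega>) + O(M)\<close>. Hence \<open>F \<rightarrow> \<alpha>\<close> while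
  \<open>F' \<rightarrow> -(1 - \<alpha>\<^sup>2)(1 + \<alpha>) < 0\<close>, which is impossible for a function with a finite limit.\<close>

lemma Bfun_add:
  fixes f g :: "'a \<Rightarrow> 'b::real_normed_vector"
  assumes "Bfun f F" "Bfun g F"
  shows "Bfun (\<lambda>x. f x + g x) F"
proof -
  obtain K1 K2 where "eventually (\<lambda>x. norm (f x) \<le> K1) F" "eventually (\<lambda>x. norm (g x) \<le> K2) F"
    using assms by (auto elim!: BfunE)
  then have "eventually (\<lambda>x. norm (f x + g x) \<le> K1 + K2) F"
    by eventually_elim (rule norm_triangle_le, simp add: add_mono)
  then show ?thesis by (rule BfunI)
qed

lemma Bfun_uminus:
  fixes f :: "'a \<Rightarrow> 'b::real_normed_vector"
  shows "Bfun f F \<Longrightarrow> Bfun (\<lambda>x. - f x) F"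
  unfolding Bfun_def by simp

lemma Bfun_diff:
  fixes f g :: "'a \<Rightarrow> 'b::real_normed_vector"
  assumes "Bfun f F" "Bfun g F"
  shows "Bfun (\<lambda>x. f x - g x) F"
  using Bfun_add[OF assms(1) Bfun_uminus[OF assms(2)]] by simp

lemma Bfun_mult:
  fixes f g :: "'a \<Rightarrow> 'b::real_normed_algebra"
  assumes "Bfun f F" "Bfun g F"
  shows "Bfun (\<lambda>x. f x * g x) F"
proof -
  obtain K1 K2 where "K1 > 0" and f_le: "eventually (\<lambda>x. norm (f x) \<le> K1) F"
    and g_le: "eventually (\<lambda>x. norm (g x) \<le> K2) F"
    using assms by (auto elim!: BfunE)
  from f_le g_le have "eventually (\<lambda>x. norm (f x * g x) \<le> K1 * K2) F"
    by eventually_elim (rule order_trans[OF norm_mult_ineq], use \<open>K1 > 0\<close> in \<open>simp add: mult_mono\<close>)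
  then show ?thesis by (rule BfunI)
qed

lemma Bfun_divide_const:
  fixes f :: "'a \<Rightarrow> 'b::real_normed_field"
  shows "Bfun f F \<Longrightarrow> Bfun (\<lambda>x. f x / c) F"
  using Bfun_mult[of f F "\<lambda>_. inverse c"] by (simp add: divide_inverse)

lemma Bfun_power2:
  fixes f :: "'a \<Rightarrow> 'b::real_normed_algebra_1"
  shows "Bfun f F \<Longrightarrow> Bfun (\<lambda>x. (f x)\<^sup>2) F"
  using Bfun_mult[of f F f] by (simp add: power2_eq_square)

lemma Bfun_eventually_norm_le:
  fixes f :: "'a \<Rightarrow> 'b::real_normed_vector" and g :: "'a \<Rightarrow> 'c::real_normed_vector"
  assumes "eventually (\<lambda>x. norm (f x) \<le> norm (g x)) F" "Bfun g F"
  shows "Bfun f F"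
proof -
  obtain K where "eventually (\<lambda>x. norm (g x) \<le> K) F"
    using assms(2) by (rule BfunE)
  with assms(1) have "eventually (\<lambda>x. norm (f x) \<le> K) F"
    by eventually_elim (rule order_trans)
  then show ?thesis by (rule BfunI)
qed

lemma Bfun_tilt_factor: "Bfun (\<lambda>x. (v x)\<^sup>2 / (3 + (v x)\<^sup>2 :: real)) F"
  by (rule BfunI[where K = 1], rule always_eventually) (simp add: add_pos_nonneg)

lemma Bfun_sin: "Bfun (\<lambda>x. sin (f x :: real)) F"
  by (rule BfunI[where K = 1], rule always_eventually) simp

lemma Bfun_cos: "Bfun (\<lambda>x. cos (f x :: real)) F"
  by (rule BfunI[where K = 1], rule always_eventually) simp

lemma tendsto_imp_Bfun:
  fixes f :: "'a \<Rightarrow> 'b::real_normed_vector"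
  assumes "(f \<longlongrightarrow> l) F"
  shows "Bfun f F"
proof -
  have "eventually (\<lambda>x. dist (f x) l < 1) F"
    using assms by (rule tendstoD) simp
  then have "eventually (\<lambda>x. norm (f x) \<le> norm l + 1) F"
  proof eventually_elim
    case (elim x)
    then show ?case
      using norm_triangle_sub[of "f x" l] by (simp add: dist_norm)
  qed
  then show ?thesis by (rule BfunI)
qed

lemma tendsto_zero_mult_Bfun:
  fixes f g :: "'a \<Rightarrow> 'b::real_normed_algebra"
  assumes "(f \<longlongrightarrow> 0) F" "Bfun g F"
  shows "((\<lambda>x. f x * g x) \<longlongrightarrow> 0) F"
  using bounded_bilinear.Zfun_prod_Bfun[OF bounded_bilinear_mult] assms
  by (simp add: tendsto_Zfun_iff)

lemma tendsto_at_top_deriv_limit_eq_0: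
  fixes f f' :: "real \<Rightarrow> real"
  assumes deriv: "eventually (\<lambda>t. (f has_real_derivative f' t) (at t)) at_top"
    and f_lim: "(f \<longlongrightarrow> l) at_top" and f'_lim: "(f' \<longlongrightarrow> L) at_top"
  shows "L = 0"
proof (rule ccontr)
  assume "L \<noteq> 0"
  then have "eventually (\<lambda>t. dist (f' t) L < \<bar>L\<bar> / 2) at_top"
    using f'_lim by (intro tendstoD) auto
  with deriv have "eventually (\<lambda>t. (f has_real_derivative f' t) (at t) \<and> \<bar>L\<bar> / 2 < \<bar>f' t\<bar>) at_top"
  proof eventually_elim
    case (elim t)
    then show ?case
      using abs_triangle_ineq2_sym[of L "f' t"] by (simp add: dist_real_def)
  qed
  then obtain T where T: "\<And>t. t \<ge> T \<Longrightarrow>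
      (f has_real_derivative f' t) (at t) \<and> \<bar>L\<bar> / 2 < \<bar>f' t\<bar>"
    unfolding eventually_at_top_linorder by blast
  have "((\<lambda>t. f (1 + t) - f t) \<longlongrightarrow> l - l) at_top"
    by (intro tendsto_intros f_lim filterlim_compose[OF f_lim]
        filterlim_tendsto_add_at_top[OF tendsto_const filterlim_ident])
  then have "eventually (\<lambda>t. \<bar>f (1 + t) - f t\<bar> < \<bar>L\<bar> / 2) at_top"
    using \<open>L \<noteq> 0\<close> by (auto dest!: tendstoD[where e = "\<bar>L\<bar> / 2"] simp: dist_real_def)
  then obtain N where N: "\<And>t. t \<ge> N \<Longrightarrow> \<bar>f (1 + t) - f t\<bar> < \<bar>L\<bar> / 2"
    unfolding eventually_at_top_linorder by blast
  define t where "t = max T N"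
  have "\<exists>z. t < z \<and> z < t + 1 \<and> f (t + 1) - f t = (t + 1 - t) * f' z"
    by (rule MVT2) (use T in \<open>auto simp: t_def\<close>)
  then obtain z where "t < z" and "f (1 + t) - f t = f' z"
    by (auto simp: add.commute)
  with T[of z] N[of t] show False
    unfolding t_def by simp
qed

lemma has_real_derivative_at_of_within_atLeast:
  assumes "\<And>t. t \<ge> a \<Longrightarrow> (f has_real_derivative f' t) (at t within {a..})" and "t > a"
  shows "(f has_real_derivative f' t) (at t)"
proof -
  have "at t within {a..} = at t"
    using \<open>t > a\<close> by (intro at_within_open_subset[of t "{a<..}"]) auto
  then show ?thesis
    using assms(1)[of t] \<open>t > a\<close> by simp
qed

definition averaged_shear :: "real \<Rightarrow> real \<Rightarrow> real \<Rightarrow> real \<Rightarrow> real" where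
  "averaged_shear sp r2 m \<psi> = sp - (1 + sp) * r2 * m * sin (2 * \<psi>) / 4"

text \<open>\<open>m * amplitude_rate \<dots>\<close> is the derivative of the amplitude \<open>(1 + \<Sigma>\<^sub>+) \<R>\<^sub>2 M\<close> of the
  correction term along the flow.\<close>

definition amplitude_rate :: "real \<Rightarrow> real \<Rightarrow> real \<Rightarrow> real \<Rightarrow> real \<Rightarrow> real \<Rightarrow> real" where
  "amplitude_rate sp r1 r2 m \<psi> v =
     (let c = cos (2 * \<psi>); s = sin (2 * \<psi>); w = v\<^sup>2 / (3 + v\<^sup>2);
          dsp = -(1 - sp\<^sup>2) * sp - r1 + (1 + sp) * r2 * c - 4 * Omega_of sp r1 * w;
          dr2 = 2 * ((1 + sp) * sp + r2 * c) * r2 - 2 * (1 + sp) * c * r1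
      in dsp * r2 + (1 + sp) * dr2 - (1 + sp) * r2 * ((1 + sp)\<^sup>2 + r2 * c + 3 * r2 * m * s))"

definition averaging_error :: "real \<Rightarrow> real \<Rightarrow> real \<Rightarrow> real \<Rightarrow> real \<Rightarrow> real \<Rightarrow> real" where
  "averaging_error sp r1 r2 m \<psi> v =
     amplitude_rate sp r1 r2 m \<psi> v * sin (2 * \<psi>) / 4
     + (1 + sp)\<^sup>2 * r1 * cos (2 * \<psi>) * sin (2 * \<psi>) / 2"

lemma Bfun_averaging_error:
  fixes sp r1 r2 m \<psi> v :: "'a \<Rightarrow> real"
  assumes "Bfun sp F" "Bfun r1 F" "Bfun r2 F" "Bfun m F"
  shows "Bfun (\<lambda>x. averaging_error (sp x) (r1 x) (r2 x) (m x) (\<psi> x) (v x)) F"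
  unfolding averaging_error_def amplitude_rate_def Let_def Omega_of_def
  by (intro Bfun_add Bfun_diff Bfun_mult Bfun_uminus Bfun_divide_const Bfun_power2 Bfun_const
      Bfun_sin Bfun_cos Bfun_tilt_factor assms)

definition averaged_shear_rate :: "real \<Rightarrow> real \<Rightarrow> real \<Rightarrow> real \<Rightarrow> real \<Rightarrow> real \<Rightarrow> real" where
  "averaged_shear_rate sp r1 r2 m \<psi> v =
     -(1 - sp\<^sup>2) * sp - r1 - 4 * Omega_of sp r1 * (v\<^sup>2 / (3 + v\<^sup>2))
     - m * averaging_error sp r1 r2 m \<psi> v"

lemma averaged_shear_has_real_derivative:
  fixes Sp R1 R2 M psi v :: "real \<Rightarrow> real" and t :: real
  assumes dSp: "(Sp has_real_derivative
      (-(1 - (Sp t)\<^sup>2) * Sp t - R1 t + (1 + Sp t) * R2 t * cos (2 * psi t)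
       - 4 * Omega_of (Sp t) (R1 t) * (v t)\<^sup>2 / (3 + (v t)\<^sup>2))) (at t)"
    and dR2: "(R2 has_real_derivative
      (2 * ((1 + Sp t) * Sp t + R2 t * cos (2 * psi t)) * R2 t
       - 2 * (1 + Sp t) * cos (2 * psi t) * R1 t)) (at t)"
    and dM: "(M has_real_derivative
      (-((1 + Sp t)\<^sup>2 + R2 t * cos (2 * psi t) + 3 * R2 t * M t * sin (2 * psi t)) * M t)) (at t)"
    and dpsi: "(psi has_real_derivative
      (2 / M t + (1 + Sp t) * (R1 t / R2 t) * sin (2 * psi t))) (at t)"
    and M_nonzero: "M t \<noteq> 0" and R2_nonzero: "R2 t \<noteq> 0"
  shows "((\<lambda>t. averaged_shear (Sp t) (R2 t) (M t) (psi t)) has_real_derivative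
      averaged_shear_rate (Sp t) (R1 t) (R2 t) (M t) (psi t) (v t)) (at t)"
proof -
  define q where "q = amplitude_rate (Sp t) (R1 t) (R2 t) (M t) (psi t) (v t)"
  have amplitude: "((\<lambda>t. (1 + Sp t) * R2 t * M t) has_real_derivative M t * q) (at t)"
    using dSp dR2 dM
    by (auto intro!: derivative_eq_intros simp: q_def amplitude_rate_def Let_def algebra_simps)
  have phase: "((\<lambda>t. sin (2 * psi t)) has_real_derivative
      cos (2 * psi t) * (2 * (2 / M t + (1 + Sp t) * (R1 t / R2 t) * sin (2 * psi t)))) (at t)"
    using dpsi by (auto intro!: derivative_eq_intros)
  have cancel: "cos (2 * psi t) * (2 * (2 / M t + (1 + Sp t) * (R1 t / R2 t) * sin (2 * psi t)))
        * ((1 + Sp t) * R2 t * M t)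
      = 4 * ((1 + Sp t) * R2 t * cos (2 * psi t))
        + 2 * M t * (1 + Sp t)\<^sup>2 * R1 t * cos (2 * psi t) * sin (2 * psi t)"
    by (simp add: field_simps power2_eq_square M_nonzero R2_nonzero)
  show ?thesis
    unfolding averaged_shear_def
    using DERIV_diff[OF dSp DERIV_cdivide[OF DERIV_mult[OF amplitude phase], of 4], unfolded cancel]
    by (rule DERIV_cong)
      (simp add: averaged_shear_rate_def averaging_error_def algebra_simps flip: q_def)
qed

lemma R1_tendsto_of_Omega_tendsto_0:
  assumes "(Sp \<longlongrightarrow> \<alpha>) F" and "((\<lambda>x. Omega_of (Sp x) (R1 x)) \<longlongrightarrow> 0) F"
  shows "(R1 \<longlongrightarrow> 1 - \<alpha>\<^sup>2) F"
proof -
  have "((\<lambda>x. 1 - (Sp x)\<^sup>2 - Omega_of (Sp x) (R1 x)) \<longlongrightarrow> 1 - \<alpha>\<^sup>2 - 0) F"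
    by (intro tendsto_intros assms)
  then show ?thesis
    by (simp add: Omega_of_def)
qed

lemma averaged_shear_tendsto:
  assumes Sp_lim: "(Sp \<longlongrightarrow> \<alpha>) F" and M_lim: "(M \<longlongrightarrow> 0) F" and "Bfun R2 F"
  shows "((\<lambda>x. averaged_shear (Sp x) (R2 x) (M x) (psi x)) \<longlongrightarrow> \<alpha>) F"
proof -
  have "((\<lambda>x. Sp x - M x * ((1 + Sp x) * R2 x * sin (2 * psi x) / 4)) \<longlongrightarrow> \<alpha> - 0) F"
    by (intro tendsto_diff Sp_lim tendsto_zero_mult_Bfun M_lim Bfun_divide_const Bfun_mult Bfun_add
        Bfun_const Bfun_sin tendsto_imp_Bfun[OF Sp_lim] \<open>Bfun R2 F\<close>)
  then show ?thesis
    by (simp add: averaged_shear_def ac_simps)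
qed

lemma averaged_shear_rate_tendsto:
  assumes Sp_lim: "(Sp \<longlongrightarrow> \<alpha>) F" and Om_lim: "((\<lambda>x. Omega_of (Sp x) (R1 x)) \<longlongrightarrow> 0) F"
    and M_lim: "(M \<longlongrightarrow> 0) F" and "Bfun R2 F"
  shows "((\<lambda>x. averaged_shear_rate (Sp x) (R1 x) (R2 x) (M x) (psi x) (v x))
    \<longlongrightarrow> -(1 - \<alpha>\<^sup>2) * (1 + \<alpha>)) F"
proof -
  have R1_lim: "(R1 \<longlongrightarrow> 1 - \<alpha>\<^sup>2) F"
    using Sp_lim Om_lim by (rule R1_tendsto_of_Omega_tendsto_0)
  have leading_lim: "((\<lambda>x. -(1 - (Sp x)\<^sup>2) * Sp x - R1 x) \<longlongrightarrow> -(1 - \<alpha>\<^sup>2) * \<alpha> - (1 - \<alpha>\<^sup>2)) F"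
    by (intro tendsto_intros Sp_lim R1_lim)
  have radiation_lim: "((\<lambda>x. 4 * Omega_of (Sp x) (R1 x) * ((v x)\<^sup>2 / (3 + (v x)\<^sup>2))) \<longlongrightarrow> 0) F"
    by (intro tendsto_zero_mult_Bfun tendsto_mult_right_zero Om_lim Bfun_tilt_factor)
  have error_lim: "((\<lambda>x. M x * averaging_error (Sp x) (R1 x) (R2 x) (M x) (psi x) (v x)) \<longlongrightarrow> 0) F"
    by (intro tendsto_zero_mult_Bfun M_lim Bfun_averaging_error \<open>Bfun R2 F\<close>
        tendsto_imp_Bfun[OF Sp_lim] tendsto_imp_Bfun[OF R1_lim] tendsto_imp_Bfun[OF M_lim])
  have "((\<lambda>x. averaged_shear_rate (Sp x) (R1 x) (R2 x) (M x) (psi x) (v x))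
      \<longlongrightarrow> -(1 - \<alpha>\<^sup>2) * \<alpha> - (1 - \<alpha>\<^sup>2) - 0 - 0) F"
    unfolding averaged_shear_rate_def
    by (rule tendsto_diff[OF tendsto_diff[OF leading_lim radiation_lim] error_lim])
  then show ?thesis
    by (simp add: algebra_simps)
qed

lemma abs_le_abs_if_square_diff_eq_square:
  fixes a b c :: real
  assumes "a\<^sup>2 - b\<^sup>2 - c\<^sup>2 = 0"
  shows "\<bar>b\<bar> \<le> \<bar>a\<bar>"
proof -
  have "b\<^sup>2 \<le> a\<^sup>2"
    using assms zero_le_power2[of c] by linarith
  then show ?thesis
    by (simp add: abs_le_square_iff)
qed

theorem lemma2:
  fixes Sp R1 R2 M psi v :: "real \<Rightarrow> real" and \<tau>0 :: real
  assumes dSp: "\<And>t. t \<ge> \<tau>0 \<Longrightarrow> (Sp has_real_derivative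
      (-(1 - (Sp t)\<^sup>2) * Sp t - R1 t + (1 + Sp t) * R2 t * cos (2 * psi t)
       - 4 * Omega_of (Sp t) (R1 t) * (v t)\<^sup>2 / (3 + (v t)\<^sup>2))) (at t within {\<tau>0..})"
    and dR1: "\<And>t. t \<ge> \<tau>0 \<Longrightarrow> (R1 has_real_derivative
      (2 * ((1 + Sp t) * Sp t + R2 t * cos (2 * psi t)) * R1 t
       - 2 * (1 + Sp t) * cos (2 * psi t) * R2 t)) (at t within {\<tau>0..})"
    and dR2: "\<And>t. t \<ge> \<tau>0 \<Longrightarrow> (R2 has_real_derivative
      (2 * ((1 + Sp t) * Sp t + R2 t * cos (2 * psi t)) * R2 t
       - 2 * (1 + Sp t) * cos (2 * psi t) * R1 t)) (at t within {\<tau>0..})"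
    and dM: "\<And>t. t \<ge> \<tau>0 \<Longrightarrow> (M has_real_derivative
      (-((1 + Sp t)\<^sup>2 + R2 t * cos (2 * psi t) + 3 * R2 t * M t * sin (2 * psi t)) * M t))
      (at t within {\<tau>0..})"
    and dpsi: "\<And>t. t \<ge> \<tau>0 \<Longrightarrow> (psi has_real_derivative
      (2 / M t + (1 + Sp t) * (R1 t / R2 t) * sin (2 * psi t))) (at t within {\<tau>0..})"
    and dv: "\<And>t. t \<ge> \<tau>0 \<Longrightarrow> (v has_real_derivative
      (6 / (3 - (v t)\<^sup>2) * Sp t * (1 - (v t)\<^sup>2) * v t)) (at t within {\<tau>0..})"
    and constraint: "\<And>t. t \<ge> \<tau>0 \<Longrightarrow>
      (R1 t)\<^sup>2 - (R2 t)\<^sup>2 - (4 * Omega_of (Sp t) (R1 t) * v t / (3 + (v t)\<^sup>2))\<^sup>2 = 0"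
    and R1_pos: "\<And>t. t \<ge> \<tau>0 \<Longrightarrow> R1 t > 0"
    and R2_pos: "\<And>t. t \<ge> \<tau>0 \<Longrightarrow> R2 t > 0"
    and M_pos: "\<And>t. t \<ge> \<tau>0 \<Longrightarrow> M t > 0"
    and M_lim: "(M \<longlongrightarrow> 0) at_top"
  shows "\<not> (((\<lambda>t. Omega_of (Sp t) (R1 t)) \<longlongrightarrow> 0) at_top \<and>
             (\<exists>\<alpha>. 0 \<le> \<alpha> \<and> \<alpha> < 1 \<and> (Sp \<longlongrightarrow> \<alpha>) at_top))"
proof
  assume "((\<lambda>t. Omega_of (Sp t) (R1 t)) \<longlongrightarrow> 0) at_top \<and>
    (\<exists>\<alpha>. 0 \<le> \<alpha> \<and> \<alpha> < 1 \<and> (Sp \<longlongrightarrow> \<alpha>) at_top)"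
  then obtain \<alpha> where Om_lim: "((\<lambda>t. Omega_of (Sp t) (R1 t)) \<longlongrightarrow> 0) at_top"
    and "0 \<le> \<alpha>" "\<alpha> < 1" and Sp_lim: "(Sp \<longlongrightarrow> \<alpha>) at_top"
    by blast
  have "eventually (\<lambda>t. norm (R2 t) \<le> norm (R1 t)) at_top"
    using eventually_ge_at_top[of \<tau>0]
    by eventually_elim (simp add: abs_le_abs_if_square_diff_eq_square[OF constraint])
  then have R2_bounded: "Bfun R2 at_top"
    using tendsto_imp_Bfun[OF R1_tendsto_of_Omega_tendsto_0[OF Sp_lim Om_lim]]
    by (rule Bfun_eventually_norm_le)
  have "eventually (\<lambda>t. ((\<lambda>t. averaged_shear (Sp t) (R2 t) (M t) (psi t)) has_real_derivative
      averaged_shear_rate (Sp t) (R1 t) (R2 t) (M t) (psi t) (v t)) (at t)) at_top"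
    using eventually_gt_at_top[of \<tau>0]
    by eventually_elim
      (intro averaged_shear_has_real_derivative has_real_derivative_at_of_within_atLeast[OF dSp]
        has_real_derivative_at_of_within_atLeast[OF dR2] has_real_derivative_at_of_within_atLeast[OF dM]
        has_real_derivative_at_of_within_atLeast[OF dpsi];
        auto dest: M_pos[OF less_imp_le] R2_pos[OF less_imp_le])
  moreover have "((\<lambda>t. averaged_shear (Sp t) (R2 t) (M t) (psi t)) \<longlongrightarrow> \<alpha>) at_top"
    using Sp_lim M_lim R2_bounded by (rule averaged_shear_tendsto)
  moreover have "((\<lambda>t. averaged_shear_rate (Sp t) (R1 t) (R2 t) (M t) (psi t) (v t))
      \<longlongrightarrow> -(1 - \<alpha>\<^sup>2) * (1 + \<alpha>)) at_top"
    using Sp_lim Om_lim M_lim R2_bounded by (rule averaged_shear_rate_tendsto)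
  ultimately have "-(1 - \<alpha>\<^sup>2) * (1 + \<alpha>) = 0"
    by (rule tendsto_at_top_deriv_limit_eq_0)
  moreover have "\<alpha>\<^sup>2 < 1"
    using \<open>0 \<le> \<alpha>\<close> \<open>\<alpha> < 1\<close> by (simp add: abs_square_less_1)
  ultimately show False
    using \<open>0 \<le> \<alpha>\<close> by simp
qed

end
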